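(* Assume the setting of the context. Then for all sufficiently small $\epsilon>0$ and every $\sigma\in\Sigma$ (writing $Q=Q^\epsilon_\sigma$, $D=D_{\kappa_\sigma}$), for $x\in\mathbb{R}\cup\{\infty\}$: (i) if $x\notin[0,\infty)$ then $Q\cdot(D\cdot x)\notin[\widetilde{x}_-,\infty)$; (ii) if $x\notin[\widetilde{x}_-,\infty)$ then $Q\cdot(D\cdot x)\notin[\widetilde{x}_c,\infty)$; (iii) if $Q\cdot(D\cdot x)\notin[0,\infty)$ then $x\notin[0,\widetilde{x}_+)$.
   Context: Let $(\Sigma,\mathbf{p})$ be a probability space. For each $\sigma\in\Sigma$ and $\epsilon\in[-1,1]$ let real numbers $a_\sigma,b_\sigma$, $\kappa_\sigma>0$ and $\alpha^\epsilon_\sigma,\beta^\epsilon_\sigma,\gamma^\epsilon_\sigma,\delta^\epsilon_\sigma$ be given, with $A^\epsilon_\sigma=\begin{pmatrix}\alpha^\epsilon_\sigma&\beta^\epsilon_\sigma\\ \gamma^\epsilon_\sigma&\delta^\epsilon_\sigma\end{pmatrix}$. Assume that for all $\sigma$: $|\log(\kappa_\sigma)|\le C_0$, $a_\sigma-|b_\sigma|\ge C_1$, $a_\sigma+|b_\sigma|\le C_2$, and $\|A^\epsilon_\sigma\|\le C_3$ for $|\epsilon|\le1$, with constants $C_0,C_1,C_2,C_3\in(0,\infty)$. On $\mathbb{R}\cup\{\infty\}$ define $D_{\kappa}\cdot x=\kappa^2x$ and $$Q^\epsilon_\sigma\cdot x=\frac{(1+\epsilon^2\alpha^\epsilon_\sigma)x+(a_\sigma-b_\sigma-\epsilon\beta^\epsilon_\sigma)\epsilon}{1+\epsilon^2\delta^\epsilon_\sigma-(a_\sigma+b_\sigma+\epsilon\gamma^\epsilon_\sigma)\epsilon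 x}.$$ Let $\lambda=\lambda(\epsilon)>0$ be a function of $\epsilon>0$ with $\lim_{\epsilon\to0}\lambda=0$ and $\lim_{\epsilon\to0}\frac{\log(\lambda)}{\log(\epsilon)}=0$, and set $\Lambda=e^{2C_0\lambda}$. Put $A=\Lambda(C_2+C_3\epsilon)\epsilon$, $B=\Lambda-1-C_3\epsilon^2(\Lambda+1)$, $C=(C_2+C_3\epsilon)\epsilon$, and $$\widetilde{x}_-=e^{2C_0}\frac{(B^2+4AC)\,C}{B^3},\qquad \widetilde{x}_+=e^{-2C_0}\frac{B^2-2AC}{AB},\qquad \widetilde{x}_c=e^{2C_0}\Lambda\,\widetilde{x}_-.$$ *)

theory Defs
  imports "HOL-Analysis.Analysis"
begin

text \<open>The projective real line R \<union> {\<infinity>}: None stands for \<infinity>.\<close>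
type_synonym ereal_proj = "real option"

definition mobius :: "real \<Rightarrow> real \<Rightarrow> real \<Rightarrow> real \<Rightarrow> real option \<Rightarrow> real option" where
  "mobius p q r s x =
     (case x of
        None \<Rightarrow> (if r = 0 then None else Some (p / r))
      | Some y \<Rightarrow> (if r * y + s = 0 then None else Some ((p * y + q) / (r * y + s))))"

definition Dact :: "real \<Rightarrow> real option \<Rightarrow> real option" where
  "Dact \<kappa> x = mobius (\<kappa>\<^sup>2) 0 0 1 x"

definition Qact :: "real \<Rightarrow> real \<Rightarrow> real \<Rightarrow> real \<Rightarrow> real \<Rightarrow> real \<Rightarrow> real \<Rightarrow> real option \<Rightarrow> real option" where
  "Qact \<epsilon> a b \<alpha> \<beta> \<gamma> \<delta> (x :: real option) =
     mobius (1 + \<epsilon>\<^sup>2 * \<alpha>) ((a - b - \<epsilon> * \<beta>) * \<epsilon>)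
            (- ((a + b + \<epsilon> * \<gamma>) * \<epsilon>)) (1 + \<epsilon>\<^sup>2 * \<delta>) x"

definition in_Ici :: "real \<Rightarrow> real option \<Rightarrow> bool" where
  "in_Ici lo x = (case x of None \<Rightarrow> False | Some y \<Rightarrow> lo \<le> y)"

definition in_Ico :: "real \<Rightarrow> real \<Rightarrow> real option \<Rightarrow> bool" where
  "in_Ico lo hi x = (case x of None \<Rightarrow> False | Some y \<Rightarrow> lo \<le> y \<and> y < hi)"

definition mat2_norm :: "real \<Rightarrow> real \<Rightarrow> real \<Rightarrow> real \<Rightarrow> real" where
  "mat2_norm p q r s = onorm (\<lambda>v :: real \<times> real. (p * fst v + q * snd v, r * fst v + s * snd v))"

end

(*
  Q is a Moebius map of positive determinant, hence increasing wherever its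
  denominator is positive, and its matrix is the shear (1, eps a_-; -eps a_+, 1)
  up to O(eps^2); D multiplies by kappa^2 in [exp (-2 C0), exp (2 C0)]. Let
  C = (C2 + C3 eps) eps bound the off-diagonal entries.
  (i) Negative points and infinity land below Q(0) = q/s <= 2C < x_-.
  (ii) For 0 <= u < U = exp (2 C0) x_- monotonicity gives Q(u) < Q(U), and
  Q(U) <= Lambda U = x_c reduces to the quadratic inequality B U - A U^2 >= C.
  With t = 4AC/B^2 and k = exp (4 C0) one has U = k C (1 + t)/B, and the
  inequality holds as soon as t <= 1 and k^2 t <= k - 1.
  (iii) For 0 <= u < exp (2 C0) x_+ the denominator of Q stays positive while
  the numerator is nonnegative.
  Finally t -> 0: Lambda - 1 >= 2 C0 lambda gives B >= C0 lambda, and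
  lambda^2 > eps eventually, so t = O(eps^2 / lambda^2) = O(eps).
*)

theory Submission
  imports Defs
begin

lemma mobius_Some:
  "r * u + s \<noteq> 0 \<Longrightarrow> mobius p q r s (Some u) = Some ((p * u + q) / (r * u + s))"
  by (simp add: mobius_def)

lemma mobius_frac_strict_mono:
  fixes p q r s u v :: real
  assumes "q * r < p * s" "0 < r * u + s" "0 < r * v + s" "u < v"
  shows "(p * u + q) / (r * u + s) < (p * v + q) / (r * v + s)"
proof -
  have "(p * v + q) * (r * u + s) - (p * u + q) * (r * v + s) = (p * s - q * r) * (v - u)"
    by (simp add: algebra_simps)
  also have "\<dots> > 0" using assms by simp
  finally show ?thesis using assms(2,3) by (simp add: divide_simps)
qed

lemma Dact_None [simp]: "Dact \<kappa> None = None"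
  by (simp add: Dact_def mobius_def)

lemma Dact_Some [simp]: "Dact \<kappa> (Some x) = Some (\<kappa>\<^sup>2 * x)"
  by (simp add: Dact_def mobius_def)

lemma in_Ici_0_Dact_iff:
  "\<kappa> \<noteq> 0 \<Longrightarrow> in_Ici 0 (Dact \<kappa> x) \<longleftrightarrow> in_Ici 0 x"
  by (cases x) (auto simp: in_Ici_def zero_le_mult_iff)

lemma in_Ici_anti:
  "lo \<le> lo' \<Longrightarrow> in_Ici lo' x \<Longrightarrow> in_Ici lo x"
  by (cases x) (auto simp: in_Ici_def)

lemma abs_entries_le_mat2_norm:
  "\<bar>p\<bar> \<le> mat2_norm p q r s" "\<bar>q\<bar> \<le> mat2_norm p q r s"
  "\<bar>r\<bar> \<le> mat2_norm p q r s" "\<bar>s\<bar> \<le> mat2_norm p q r s"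
proof -
  define f where "f = (\<lambda>v :: real \<times> real. (p * fst v + q * snd v, r * fst v + s * snd v))"
  have "linear f" unfolding f_def by (rule linearI) (auto simp: algebra_simps)
  hence "bounded_linear f" by (simp add: linear_conv_bounded_linear)
  hence "norm (f v) \<le> mat2_norm p q r s" if "norm v = 1" for v
    using onorm[of f v] that by (simp add: mat2_norm_def f_def)
  from this[of "(1, 0)"] this[of "(0, 1)"]
  have "norm (p, r) \<le> mat2_norm p q r s" "norm (q, s) \<le> mat2_norm p q r s"
    by (simp_all add: f_def norm_Pair)
  moreover have "\<bar>p\<bar> \<le> norm (p, r)" "\<bar>r\<bar> \<le> norm (p, r)" "\<bar>q\<bar> \<le> norm (q, s)" "\<bar>s\<bar> \<le> norm (q, s)"
    by (simp_all add: norm_Pair)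
  ultimately show "\<bar>p\<bar> \<le> mat2_norm p q r s" "\<bar>q\<bar> \<le> mat2_norm p q r s"
    "\<bar>r\<bar> \<le> mat2_norm p q r s" "\<bar>s\<bar> \<le> mat2_norm p q r s"
    by linarith+
qed

lemma power2_le_exp_of_abs_ln_le:
  fixes \<kappa> c :: real
  assumes "0 < \<kappa>" "\<bar>ln \<kappa>\<bar> \<le> c"
  shows "\<kappa>\<^sup>2 \<le> exp (2 * c)"
proof -
  have "\<kappa>\<^sup>2 = exp (2 * ln \<kappa>)" using assms(1) by (simp add: exp_double)
  thus ?thesis using assms(2) by simp
qed

locale near_shear =
  fixes p q r s c h :: real
  assumes p_near: "\<bar>p - 1\<bar> \<le> h" and s_near: "\<bar>s - 1\<bar> \<le> h" and h_le: "h \<le> 1/2"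
    and q_pos: "0 < q" and q_le: "q \<le> c" and r_neg: "r < 0" and minus_r_le: "- r \<le> c"
begin

lemma p_ge: "1/2 \<le> p" and s_ge: "1/2 \<le> s" and c_pos: "0 < c"
  using p_near s_near h_le q_pos q_le by auto

lemma det_pos: "q * r < p * s"
proof -
  have "q * r < 0" using q_pos r_neg by (rule mult_pos_neg)
  moreover have "0 < p * s" using p_ge s_ge by simp
  ultimately show ?thesis by linarith
qed

lemma denom_pos: "0 \<le> u \<Longrightarrow> c * u < 1/2 \<Longrightarrow> 0 < r * u + s"
  using minus_r_le s_ge mult_right_mono[of "- r" c u] by simp

lemma mobius_notin_Ici:
  assumes "\<not> in_Ici 0 x"
  shows "\<not> in_Ici (2 * c) (mobius p q r s x)"
proof (cases x)
  case None
  have "p / r < 0" using p_ge r_neg by (simp add: divide_pos_neg)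
  thus ?thesis using None r_neg c_pos by (simp add: mobius_def in_Ici_def)
next
  case (Some u)
  with assms have "u < 0" by (simp add: in_Ici_def)
  hence "0 < r * u" using r_neg by (simp add: mult_neg_neg)
  hence den: "0 < r * u + s" using s_ge by simp
  have "(p * u + q) / (r * u + s) < (p * 0 + q) / (r * 0 + s)"
    using mobius_frac_strict_mono[OF det_pos den _ \<open>u < 0\<close>] s_ge by simp
  also have "\<dots> \<le> 2 * c"
  proof -
    have "c * 1 \<le> c * (2 * s)" using c_pos s_ge by (intro mult_left_mono) auto
    hence "q \<le> 2 * c * s" using q_le by simp
    thus ?thesis using s_ge by (simp add: divide_le_eq)
  qed
  finally show ?thesis using Some den by (simp add: mobius_Some in_Ici_def)
qed

lemma mobius_lt_threshold:
  assumes "0 \<le> u" "u < U" "c * U < 1/2" "(1 + h) * U + c \<le> T * (1 - h - c * U)"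
  shows "\<not> in_Ici T (mobius p q r s (Some u))"
proof -
  have "0 \<le> U" using assms by simp
  have "c * u < c * U" using assms(2) c_pos by simp
  hence "c * u < 1/2" using assms(3) by linarith
  hence den: "0 < r * u + s" "0 < r * U + s" using assms(1,3) \<open>0 \<le> U\<close> denom_pos by auto
  have "0 \<le> h" using p_near by simp
  hence "0 < (1 + h) * U + c" using c_pos \<open>0 \<le> U\<close> by (intro add_nonneg_pos mult_nonneg_nonneg) auto
  hence "0 < T * (1 - h - c * U)" using assms(4) by linarith
  moreover have "0 < 1 - h - c * U" using assms(3) h_le by simp
  ultimately have "0 < T" by (simp add: zero_less_mult_iff)
  have "p \<le> 1 + h" using p_near by simp
  hence "p * U + q \<le> (1 + h) * U + c"
    using q_le \<open>0 \<le> U\<close> by (simp add: add_mono mult_right_mono)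
  also have "\<dots> \<le> T * (1 - h - c * U)" by fact
  also have "\<dots> \<le> T * (r * U + s)"
  proof -
    have "- r * U \<le> c * U" using minus_r_le \<open>0 \<le> U\<close> by (rule mult_right_mono)
    hence "1 - h - c * U \<le> r * U + s" using s_near by simp
    thus ?thesis using \<open>0 < T\<close> by simp
  qed
  finally have "(p * U + q) / (r * U + s) \<le> T" using den by (simp add: divide_simps)
  with mobius_frac_strict_mono[OF det_pos den assms(2)]
  show ?thesis using den by (simp add: mobius_Some in_Ici_def)
qed

lemma mobius_in_Ici_0:
  assumes "0 \<le> u" "c * u < 1/2"
  shows "in_Ici 0 (mobius p q r s (Some u))"
  using denom_pos[OF assms] assms(1) p_ge q_pos
  by (simp add: mobius_Some in_Ici_def)

lemma mobius_Dact_notin_Ici: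
  assumes "\<kappa> \<noteq> 0" "2 * c \<le> t" "\<not> in_Ici 0 x"
  shows "\<not> in_Ici t (mobius p q r s (Dact \<kappa> x))"
  using mobius_notin_Ici[of "Dact \<kappa> x"] assms in_Ici_0_Dact_iff in_Ici_anti by blast

lemma mobius_Dact_notin_Ici_threshold:
  assumes "\<kappa> \<noteq> 0" "\<kappa>\<^sup>2 \<le> E" "2 * c \<le> T" "\<not> in_Ici t x"
    and "c * (E * t) < 1/2" "(1 + h) * (E * t) + c \<le> T * (1 - h - c * (E * t))"
  shows "\<not> in_Ici T (mobius p q r s (Dact \<kappa> x))"
proof (cases "in_Ici 0 x")
  case False
  thus ?thesis using mobius_Dact_notin_Ici assms(1,3) by blast
next
  case True
  then obtain x0 where x: "x = Some x0" "0 \<le> x0" "x0 < t"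
    using assms(4) by (cases x) (auto simp: in_Ici_def)
  have "0 < E" using assms(1,2) by (meson less_le_trans zero_less_power2)
  have "\<kappa>\<^sup>2 * x0 \<le> E * x0" using assms(2) x(2) by (rule mult_right_mono)
  also have "\<dots> < E * t" using \<open>0 < E\<close> x(3) by simp
  finally show ?thesis
    using mobius_lt_threshold[of "\<kappa>\<^sup>2 * x0" "E * t" T] assms(5,6) x by simp
qed

lemma mobius_Dact_in_Ici_0:
  assumes "\<kappa> \<noteq> 0" "\<kappa>\<^sup>2 \<le> E" "c * (E * t) \<le> 1/2" "in_Ico 0 t x"
  shows "in_Ici 0 (mobius p q r s (Dact \<kappa> x))"
proof -
  obtain x0 where x: "x = Some x0" "0 \<le> x0" "x0 < t"
    using assms(4) by (cases x) (auto simp: in_Ico_def)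
  have "0 < E" using assms(1,2) by (meson less_le_trans zero_less_power2)
  have "c * (\<kappa>\<^sup>2 * x0) \<le> c * (E * x0)"
    using c_pos assms(2) x(2) by (intro mult_left_mono mult_right_mono) auto
  also have "\<dots> < c * (E * t)" using c_pos \<open>0 < E\<close> x(3) by simp
  finally show ?thesis using mobius_in_Ici_0[of "\<kappa>\<^sup>2 * x0"] assms(3) x by simp
qed

end

lemma near_shear_Qact_coeffs:
  fixes \<epsilon> C2 C3 a b \<alpha> \<beta> \<gamma> \<delta> :: real
  assumes \<epsilon>: "0 < \<epsilon>" "C3 * \<epsilon>\<^sup>2 \<le> 1/2"
    and entries: "\<bar>\<alpha>\<bar> \<le> C3" "\<bar>\<beta>\<bar> \<le> C3" "\<bar>\<gamma>\<bar> \<le> C3" "\<bar>\<delta>\<bar> \<le> C3"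
    and ab: "C3 * \<epsilon> < a - \<bar>b\<bar>" "a + \<bar>b\<bar> \<le> C2"
  shows "near_shear (1 + \<epsilon>\<^sup>2 * \<alpha>) ((a - b - \<epsilon> * \<beta>) * \<epsilon>) (- ((a + b + \<epsilon> * \<gamma>) * \<epsilon>))
           (1 + \<epsilon>\<^sup>2 * \<delta>) ((C2 + C3 * \<epsilon>) * \<epsilon>) (C3 * \<epsilon>\<^sup>2)"
proof unfold_locales
  have "\<epsilon>\<^sup>2 * \<bar>\<alpha>\<bar> \<le> \<epsilon>\<^sup>2 * C3" "\<epsilon>\<^sup>2 * \<bar>\<delta>\<bar> \<le> \<epsilon>\<^sup>2 * C3"
    using entries by (simp_all add: mult_left_mono)
  thus "\<bar>1 + \<epsilon>\<^sup>2 * \<alpha> - 1\<bar> \<le> C3 * \<epsilon>\<^sup>2" "\<bar>1 + \<epsilon>\<^sup>2 * \<delta> - 1\<bar> \<le> C3 * \<epsilon>\<^sup>2"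
    by (simp_all add: abs_mult ac_simps)
  show "C3 * \<epsilon>\<^sup>2 \<le> 1/2" by (fact \<epsilon>(2))
  have "\<bar>\<epsilon> * \<beta>\<bar> \<le> C3 * \<epsilon>" "\<bar>\<epsilon> * \<gamma>\<bar> \<le> C3 * \<epsilon>"
    using \<epsilon>(1) entries by (simp_all add: abs_mult mult.commute mult_left_mono)
  hence "0 < a - b - \<epsilon> * \<beta>" "a - b - \<epsilon> * \<beta> \<le> C2 + C3 * \<epsilon>"
    "0 < a + b + \<epsilon> * \<gamma>" "a + b + \<epsilon> * \<gamma> \<le> C2 + C3 * \<epsilon>"
    using ab by (auto simp: abs_le_iff)
  thus "0 < (a - b - \<epsilon> * \<beta>) * \<epsilon>" "(a - b - \<epsilon> * \<beta>) * \<epsilon> \<le> (C2 + C3 * \<epsilon>) * \<epsilon>"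
    "- ((a + b + \<epsilon> * \<gamma>) * \<epsilon>) < 0" "- (- ((a + b + \<epsilon> * \<gamma>) * \<epsilon>)) \<le> (C2 + C3 * \<epsilon>) * \<epsilon>"
    using \<epsilon>(1) by (simp_all add: mult_right_mono)
qed

lemma two_mult_lt_xminus:
  fixes E A B C :: real
  assumes "1 < E" "0 \<le> A" "0 < C" "0 < B" "B \<le> 1/2"
  shows "2 * C < E * ((B\<^sup>2 + 4 * A * C) * C) / B ^ 3"
proof -
  have "2 * C \<le> C / B" using assms(3-5) by (simp add: divide_simps)
  also have "\<dots> < E * C / B" using assms(1,3,4) by (simp add: divide_strict_right_mono)
  also have "\<dots> = E * (B\<^sup>2 * C) / B ^ 3" using assms(4) by (simp add: power2_eq_square power3_eq_cube)
  also have "\<dots> \<le> E * ((B\<^sup>2 + 4 * A * C) * C) / B ^ 3"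
    using assms by (intro divide_right_mono mult_left_mono mult_right_mono) auto
  finally show ?thesis .
qed

lemma quadratic_margin:
  fixes A B C k t :: real
  assumes "0 < B" "0 \<le> C" "0 \<le> t" "t \<le> 1" "1 < k" "k\<^sup>2 * t \<le> k - 1" "4 * A * C = t * B\<^sup>2"
  defines "U \<equiv> k * C * (1 + t) / B"
  shows "C \<le> B * U - A * U\<^sup>2"
proof -
  have "B * U = k * C * (1 + t)" using assms(1) by (simp add: U_def)
  moreover have "A * U\<^sup>2 = k\<^sup>2 * C * (1 + t)\<^sup>2 * (t / 4)"
  proof -
    have "A * U\<^sup>2 = (4 * A * C) * (k\<^sup>2 * C * (1 + t)\<^sup>2) / (4 * B\<^sup>2)"
      by (simp add: U_def power_divide power_mult_distrib power2_eq_square)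
    thus ?thesis using assms(1,7) by (simp add: power2_eq_square)
  qed
  moreover have "(1 + t)\<^sup>2 * (t / 4) \<le> t"
    using assms(3,4) mult_right_mono[of "(1 + t)\<^sup>2" 4 "t / 4"] power_mono[of "1 + t" 2 2] by simp
  hence "k\<^sup>2 * C * ((1 + t)\<^sup>2 * (t / 4)) \<le> k\<^sup>2 * C * t"
    using assms(2) by (intro mult_left_mono) auto
  moreover have "0 \<le> k * C * t" using assms(2,3,5) by simp
  moreover have "k\<^sup>2 * C * t \<le> (k - 1) * C"
    using mult_right_mono[OF assms(6,2)] by (simp add: mult_ac)
  ultimately show ?thesis by (simp add: algebra_simps)
qed

lemma quadratic_margin_point_bound:
  fixes A B C k t :: real
  assumes "0 < B" "B \<le> 1/2" "0 \<le> C" "C \<le> A" "0 \<le> t" "t \<le> 1" "1 < k" "k\<^sup>2 * t \<le> k - 1"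
    "4 * A * C = t * B\<^sup>2"
  shows "C * (k * C * (1 + t) / B) < 1/2"
proof -
  have "k * (k * t) < k * 1" using assms(8) by (simp add: power2_eq_square mult.assoc)
  hence "k * t < 1" using assms(7) by simp
  have "C * (k * C * (1 + t) / B) = k * (1 + t) * (C * C) / B" by simp
  also have "\<dots> \<le> k * (1 + t) * (A * C) / B"
    using assms(1,3,4,5,7) by (intro divide_right_mono mult_left_mono mult_right_mono) auto
  also have "\<dots> = k * t * ((1 + t) * B) / 4"
  proof -
    have AC: "A * C = t * B\<^sup>2 / 4" using assms(9) by simp
    show ?thesis unfolding AC using assms(1) by (simp add: field_simps power2_eq_square)
  qed
  also have "\<dots> \<le> k * t / 4"
  proof -
    have "(1 + t) * B \<le> 2 * (1/2)" using assms(1,2,6) by (intro mult_mono) auto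
    moreover have "0 \<le> k * t" using assms(5,7) by simp
    ultimately show ?thesis by (simp add: mult_left_le)
  qed
  finally show ?thesis using \<open>k * t < 1\<close> by linarith
qed

lemma mult_xplus_le_half:
  fixes A B C L :: real
  assumes "0 < C" "1 \<le> L" "A = L * C" "0 < B" "B \<le> 1/2"
  shows "C * ((B\<^sup>2 - 2 * A * C) / (A * B)) \<le> 1/2"
proof -
  have "C * ((B\<^sup>2 - 2 * A * C) / (A * B)) \<le> C * (B\<^sup>2 / (A * B))"
    using assms by (intro mult_left_mono divide_right_mono) auto
  also have "\<dots> = B / L" using assms by (simp add: field_simps power2_eq_square)
  also have "\<dots> \<le> B" using assms by (simp add: divide_le_eq mult_le_cancel_left1)
  finally show ?thesis using assms(5) by linarith
qed

lemma shear_thresholds: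
  fixes E L C h B :: real
  assumes "1 < E" "1 \<le> L" "0 < C" "B = L - 1 - h * (L + 1)" "0 < B" "B \<le> 1/2"
    and "4 * (L * C) * C / B\<^sup>2 \<le> 1" "4 * (L * C) * C / B\<^sup>2 \<le> (E\<^sup>2 - 1) / E ^ 4"
  defines "xm \<equiv> E * ((B\<^sup>2 + 4 * (L * C) * C) * C) / B ^ 3"
  shows "2 * C < xm" "xm \<le> E * L * xm" "C * (E * xm) < 1/2"
    "(1 + h) * (E * xm) + C \<le> (E * L * xm) * (1 - h - C * (E * xm))"
proof -
  define t where "t = 4 * (L * C) * C / B\<^sup>2"
  have t: "0 \<le> t" "t \<le> 1" "4 * (L * C) * C = t * B\<^sup>2"
    using assms(2,3,5,7) by (simp_all add: t_def)
  have "(E\<^sup>2)\<^sup>2 * t \<le> E\<^sup>2 - 1" using assms(1,8) by (simp add: t_def field_simps flip: power_mult)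
  have U: "E * xm = E\<^sup>2 * C * (1 + t) / B"
    using assms(5) by (simp add: xm_def t_def field_simps power2_eq_square power3_eq_cube)
  show "2 * C < xm" unfolding xm_def using assms by (intro two_mult_lt_xminus) auto
  moreover have "1 \<le> E * L" using assms(1,2) mult_mono[of 1 E 1 L] by simp
  ultimately show "xm \<le> E * L * xm" using assms(3) by (simp add: mult_le_cancel_right1)
  show "C * (E * xm) < 1/2" unfolding U
    using assms(1-6) t \<open>(E\<^sup>2)\<^sup>2 * t \<le> E\<^sup>2 - 1\<close>
    by (intro quadratic_margin_point_bound[where A = "L * C"]) (auto simp: one_less_power)
  have "C \<le> B * (E * xm) - (L * C) * (E * xm)\<^sup>2" unfolding U
    using assms(1,3,5) t \<open>(E\<^sup>2)\<^sup>2 * t \<le> E\<^sup>2 - 1\<close>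
    by (intro quadratic_margin) (auto simp: one_less_power)
  thus "(1 + h) * (E * xm) + C \<le> (E * L * xm) * (1 - h - C * (E * xm))"
    using assms(4) by (simp add: algebra_simps power2_eq_square)
qed

lemma Qact_Dact_thresholds:
  fixes \<epsilon> l C0 C2 C3 a b \<kappa> \<alpha> \<beta> \<gamma> \<delta> :: real and x :: "real option"
  defines "\<Lambda> \<equiv> exp (2 * C0 * l)"
  defines "A \<equiv> \<Lambda> * (C2 + C3 * \<epsilon>) * \<epsilon>" and "B \<equiv> \<Lambda> - 1 - C3 * \<epsilon>\<^sup>2 * (\<Lambda> + 1)"
    and "C \<equiv> (C2 + C3 * \<epsilon>) * \<epsilon>"
  defines "xm \<equiv> exp (2 * C0) * ((B\<^sup>2 + 4 * A * C) * C) / B ^ 3"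
    and "xp \<equiv> exp (- 2 * C0) * (B\<^sup>2 - 2 * A * C) / (A * B)"
  defines "xc \<equiv> exp (2 * C0) * \<Lambda> * xm"
    and "y \<equiv> Qact \<epsilon> a b \<alpha> \<beta> \<gamma> \<delta> (Dact \<kappa> x)"
  assumes C0: "0 < C0" and C2: "0 < C2" and C3: "0 \<le> C3"
    and \<epsilon>: "0 < \<epsilon>" "C3 * \<epsilon>\<^sup>2 \<le> 1/2" and l: "0 \<le> l"
    and \<kappa>: "0 < \<kappa>" "\<bar>ln \<kappa>\<bar> \<le> C0"
    and ab: "C3 * \<epsilon> < a - \<bar>b\<bar>" "a + \<bar>b\<bar> \<le> C2"
    and entries: "\<bar>\<alpha>\<bar> \<le> C3" "\<bar>\<beta>\<bar> \<le> C3" "\<bar>\<gamma>\<bar> \<le> C3" "\<bar>\<delta>\<bar> \<le> C3"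
    and B: "0 < B" "B \<le> 1/2"
    and ratio: "4 * A * C / B\<^sup>2 \<le> 1" "4 * A * C / B\<^sup>2 \<le> ((exp (2 * C0))\<^sup>2 - 1) / exp (2 * C0) ^ 4"
  shows "\<not> in_Ici 0 x \<Longrightarrow> \<not> in_Ici xm y"
    and "\<not> in_Ici xm x \<Longrightarrow> \<not> in_Ici xc y"
    and "\<not> in_Ici 0 y \<Longrightarrow> \<not> in_Ico 0 xp x"
proof -
  define E where "E = exp (2 * C0)"
  have "1 < E" "1 \<le> \<Lambda>" "0 < C" "A = \<Lambda> * C"
    using C0 C2 C3 \<epsilon>(1) l by (auto simp: E_def \<Lambda>_def A_def C_def add_pos_nonneg)
  have th: "2 * C < xm" "xm \<le> xc" "C * (E * xm) < 1/2"
      "(1 + C3 * \<epsilon>\<^sup>2) * (E * xm) + C \<le> xc * (1 - C3 * \<epsilon>\<^sup>2 - C * (E * xm))"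
    unfolding xc_def xm_def \<open>A = \<Lambda> * C\<close> E_def[symmetric]
    using shear_thresholds[of E \<Lambda> C B "C3 * \<epsilon>\<^sup>2"] \<open>1 < E\<close> \<open>1 \<le> \<Lambda>\<close> \<open>0 < C\<close> B ratio
    by (auto simp: B_def E_def \<open>A = \<Lambda> * C\<close>)
  have "E * xp = (B\<^sup>2 - 2 * A * C) / (A * B)" by (simp add: E_def xp_def flip: exp_add)
  hence xp: "C * (E * xp) \<le> 1/2"
    using mult_xplus_le_half[OF \<open>0 < C\<close> \<open>1 \<le> \<Lambda>\<close> \<open>A = \<Lambda> * C\<close> B] by simp
  interpret near_shear "1 + \<epsilon>\<^sup>2 * \<alpha>" "(a - b - \<epsilon> * \<beta>) * \<epsilon>" "- ((a + b + \<epsilon> * \<gamma>) * \<epsilon>)"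
      "1 + \<epsilon>\<^sup>2 * \<delta>" C "C3 * \<epsilon>\<^sup>2"
    unfolding C_def using \<epsilon> entries ab by (rule near_shear_Qact_coeffs)
  have y: "y = mobius (1 + \<epsilon>\<^sup>2 * \<alpha>) ((a - b - \<epsilon> * \<beta>) * \<epsilon>) (- ((a + b + \<epsilon> * \<gamma>) * \<epsilon>))
      (1 + \<epsilon>\<^sup>2 * \<delta>) (Dact \<kappa> x)"
    by (simp add: y_def Qact_def)
  have "\<kappa> \<noteq> 0" "\<kappa>\<^sup>2 \<le> E" using \<kappa> power2_le_exp_of_abs_ln_le by (auto simp: E_def)
  show "\<not> in_Ici 0 x \<Longrightarrow> \<not> in_Ici xm y"
    unfolding y using mobius_Dact_notin_Ici \<open>\<kappa> \<noteq> 0\<close> th(1) by simp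
  show "\<not> in_Ici xm x \<Longrightarrow> \<not> in_Ici xc y"
    unfolding y using mobius_Dact_notin_Ici_threshold \<open>\<kappa> \<noteq> 0\<close> \<open>\<kappa>\<^sup>2 \<le> E\<close> th by simp
  show "\<not> in_Ici 0 y \<Longrightarrow> \<not> in_Ico 0 xp x"
    unfolding y using mobius_Dact_in_Ici_0 \<open>\<kappa> \<noteq> 0\<close> \<open>\<kappa>\<^sup>2 \<le> E\<close> xp by blast
qed

lemma eventually_less_power_of_ln_ratio:
  fixes f :: "real \<Rightarrow> real" and n :: nat
  assumes "0 < n" "eventually (\<lambda>x. 0 < f x) (at_right 0)"
    and "((\<lambda>x. ln (f x) / ln x) \<longlongrightarrow> 0) (at_right 0)"
  shows "eventually (\<lambda>x. x < f x ^ n) (at_right 0)"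
proof -
  have "eventually (\<lambda>x. ln (f x) / ln x < 1 / n) (at_right 0)"
    using order_tendstoD(2)[OF assms(3)] assms(1) by simp
  moreover have "eventually (\<lambda>x. 0 < x \<and> x < 1) (at_right (0::real))"
    unfolding eventually_at_right_field by (intro exI[of _ 1]) auto
  ultimately show ?thesis using assms(2)
  proof eventually_elim
    case (elim x)
    hence "ln x < 0" by simp
    hence "ln x < n * ln (f x)" using elim(1) assms(1) by (simp add: field_simps)
    also have "\<dots> = ln (f x ^ n)" using elim(3) by (simp add: ln_realpow)
    finally show ?case using elim by (simp add: ln_less_cancel_iff)
  qed
qed

lemma eventually_gap_bounds:
  fixes C0 C3 :: real and lam :: "real \<Rightarrow> real"
  assumes "0 < C0" "0 \<le> C3" "(lam \<longlongrightarrow> 0) (at_right 0)"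
    and "eventually (\<lambda>\<epsilon>. 0 < lam \<epsilon> \<and> \<epsilon> < lam \<epsilon> ^ 2) (at_right 0)"
  defines "G \<equiv> \<lambda>\<epsilon>. exp (2 * C0 * lam \<epsilon>) - 1 - C3 * \<epsilon>\<^sup>2 * (exp (2 * C0 * lam \<epsilon>) + 1)"
  shows "eventually (\<lambda>\<epsilon>. C0 * lam \<epsilon> \<le> G \<epsilon> \<and> G \<epsilon> \<le> 1/2) (at_right 0)"
proof -
  have "((\<lambda>\<epsilon>. exp (2 * C0 * lam \<epsilon>)) \<longlongrightarrow> exp (2 * C0 * 0)) (at_right 0)"
    by (intro tendsto_intros assms(3))
  hence "eventually (\<lambda>\<epsilon>. exp (2 * C0 * lam \<epsilon>) < 3/2) (at_right 0)"
    by (rule order_tendstoD(2)) simp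
  moreover have "eventually (\<lambda>\<epsilon>. lam \<epsilon> < 1) (at_right 0)"
    using order_tendstoD(2)[OF assms(3)] by simp
  moreover have "eventually (\<lambda>\<epsilon>. 0 < \<epsilon> \<and> 3 * C3 * \<epsilon> \<le> C0) (at_right (0::real))"
    unfolding eventually_at_right_field
    using assms(1,2) by (intro exI[of _ "C0 / (3 * C3 + 1)"]) (auto simp: field_simps)
  ultimately show ?thesis using assms(4)
  proof eventually_elim
    case (elim \<epsilon>)
    define L where "L = exp (2 * C0 * lam \<epsilon>)"
    have "lam \<epsilon> * lam \<epsilon> \<le> lam \<epsilon>" using elim by (simp add: mult_left_le_one_le)
    moreover have "\<epsilon> < lam \<epsilon> * lam \<epsilon>" using elim by (simp add: power2_eq_square)
    ultimately have "\<epsilon> < lam \<epsilon>" by linarith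
    have "C3 * \<epsilon>\<^sup>2 * (L + 1) \<le> C3 * \<epsilon>\<^sup>2 * 3"
      using elim assms(2) by (intro mult_left_mono) (auto simp: L_def)
    also have "\<dots> = 3 * C3 * \<epsilon> * \<epsilon>" by (simp add: power2_eq_square)
    also have "\<dots> \<le> C0 * \<epsilon>" using elim by (simp add: mult_right_mono)
    also have "\<dots> \<le> C0 * lam \<epsilon>" using \<open>\<epsilon> < lam \<epsilon>\<close> assms(1) by simp
    finally have "C3 * \<epsilon>\<^sup>2 * (L + 1) \<le> C0 * lam \<epsilon>" .
    moreover have "0 \<le> C3 * \<epsilon>\<^sup>2 * (L + 1)" using assms(2) by (simp add: L_def)
    moreover have "1 + 2 * C0 * lam \<epsilon> \<le> L" unfolding L_def by (rule exp_ge_add_one_self)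
    ultimately show ?case using elim(1) by (simp add: G_def flip: L_def)
  qed
qed

lemma shear_ratio_tendsto_zero:
  fixes C0 C2 C3 :: real and lam B :: "real \<Rightarrow> real"
  assumes "0 < C0" "0 \<le> C2" "0 \<le> C3" "(lam \<longlongrightarrow> 0) (at_right 0)"
    and "eventually (\<lambda>\<epsilon>. 0 < lam \<epsilon> \<and> \<epsilon> < lam \<epsilon> ^ 2) (at_right 0)"
    and "eventually (\<lambda>\<epsilon>. C0 * lam \<epsilon> \<le> B \<epsilon>) (at_right 0)"
  shows "((\<lambda>\<epsilon>. 4 * (exp (2 * C0 * lam \<epsilon>) * (C2 + C3 * \<epsilon>) * \<epsilon>) * ((C2 + C3 * \<epsilon>) * \<epsilon>) / (B \<epsilon>)\<^sup>2)
           \<longlongrightarrow> 0) (at_right 0)"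
    (is "(?r \<longlongrightarrow> 0) _")
proof -
  define K where "K = 8 * (C2 + C3)\<^sup>2 / C0\<^sup>2"
  have "((\<lambda>\<epsilon>. exp (2 * C0 * lam \<epsilon>)) \<longlongrightarrow> exp (2 * C0 * 0)) (at_right 0)"
    by (intro tendsto_intros assms(4))
  hence "eventually (\<lambda>\<epsilon>. exp (2 * C0 * lam \<epsilon>) < 2) (at_right 0)"
    by (rule order_tendstoD(2)) simp
  moreover have "eventually (\<lambda>\<epsilon>. 0 < \<epsilon> \<and> \<epsilon> < 1) (at_right (0::real))"
    unfolding eventually_at_right_field by (intro exI[of _ 1]) auto
  ultimately have "eventually (\<lambda>\<epsilon>. 0 \<le> ?r \<epsilon> \<and> ?r \<epsilon> \<le> K * \<epsilon>) (at_right 0)"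
    using assms(5,6)
  proof eventually_elim
    case (elim \<epsilon>)
    define D where "D = (C2 + C3 * \<epsilon>) * \<epsilon>"
    have D: "0 \<le> D" "D \<le> (C2 + C3) * \<epsilon>"
      using elim assms(2,3) by (auto simp: D_def mult_left_le intro!: mult_right_mono)
    have r: "?r \<epsilon> = 4 * exp (2 * C0 * lam \<epsilon>) * D\<^sup>2 / (B \<epsilon>)\<^sup>2"
      by (simp add: D_def power2_eq_square)
    have "?r \<epsilon> \<le> 8 * ((C2 + C3) * \<epsilon>)\<^sup>2 / (C0 * lam \<epsilon>)\<^sup>2"
      unfolding r
    proof (rule frac_le)
      show "4 * exp (2 * C0 * lam \<epsilon>) * D\<^sup>2 \<le> 8 * ((C2 + C3) * \<epsilon>)\<^sup>2"
        using elim D by (intro mult_mono power_mono) auto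
      show "(C0 * lam \<epsilon>)\<^sup>2 \<le> (B \<epsilon>)\<^sup>2" using elim assms(1) by (intro power_mono) auto
    qed (use elim assms(1) in auto)
    also have "\<dots> \<le> 8 * ((C2 + C3) * \<epsilon>)\<^sup>2 / (C0\<^sup>2 * \<epsilon>)"
      using elim assms(1) by (intro divide_left_mono) (auto simp: power_mult_distrib)
    also have "\<dots> = K * \<epsilon>" using elim assms(1) by (simp add: K_def power2_eq_square)
    finally show ?case unfolding r by simp
  qed
  hence "eventually (\<lambda>\<epsilon>. 0 \<le> ?r \<epsilon>) (at_right 0)" "eventually (\<lambda>\<epsilon>. ?r \<epsilon> \<le> K * \<epsilon>) (at_right 0)"
    by (simp_all add: eventually_conj_iff)
  moreover have "((\<lambda>\<epsilon>. K * \<epsilon>) \<longlongrightarrow> 0) (at_right 0)"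
    by (auto intro!: tendsto_eq_intros)
  ultimately show ?thesis by (rule tendsto_sandwich[OF _ _ tendsto_const])
qed

lemma eventually_scale_conditions:
  fixes C0 C2 C3 :: real and lam :: "real \<Rightarrow> real"
  assumes C: "0 < C0" "0 \<le> C2" "0 \<le> C3"
    and lam: "eventually (\<lambda>\<epsilon>. 0 < lam \<epsilon>) (at_right 0)" "(lam \<longlongrightarrow> 0) (at_right 0)"
      "((\<lambda>\<epsilon>. ln (lam \<epsilon>) / ln \<epsilon>) \<longlongrightarrow> 0) (at_right 0)"
  defines "B \<equiv> \<lambda>\<epsilon>. exp (2 * C0 * lam \<epsilon>) - 1 - C3 * \<epsilon>\<^sup>2 * (exp (2 * C0 * lam \<epsilon>) + 1)"
  defines "R \<equiv> \<lambda>\<epsilon>. 4 * (exp (2 * C0 * lam \<epsilon>) * (C2 + C3 * \<epsilon>) * \<epsilon>) * ((C2 + C3 * \<epsilon>) * \<epsilon>) / (B \<epsilon>)\<^sup>2"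
  shows "eventually (\<lambda>\<epsilon>. 0 < lam \<epsilon> \<and> 0 < B \<epsilon> \<and> B \<epsilon> \<le> 1/2 \<and>
      R \<epsilon> \<le> 1 \<and> R \<epsilon> \<le> ((exp (2 * C0))\<^sup>2 - 1) / exp (2 * C0) ^ 4) (at_right 0)"
proof -
  have "eventually (\<lambda>\<epsilon>. \<epsilon> < lam \<epsilon> ^ 2) (at_right 0)"
    using eventually_less_power_of_ln_ratio[OF _ lam(1,3), of 2] by simp
  with lam(1) have lam_sq: "eventually (\<lambda>\<epsilon>. 0 < lam \<epsilon> \<and> \<epsilon> < lam \<epsilon> ^ 2) (at_right 0)"
    by (rule eventually_conj)
  have gap: "eventually (\<lambda>\<epsilon>. C0 * lam \<epsilon> \<le> B \<epsilon> \<and> B \<epsilon> \<le> 1/2) (at_right 0)"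
    unfolding B_def using eventually_gap_bounds[OF C(1,3) lam(2) lam_sq] by simp
  have "0 < min 1 (((exp (2 * C0))\<^sup>2 - 1) / exp (2 * C0) ^ 4)"
    using C(1) by (simp add: one_less_power)
  with shear_ratio_tendsto_zero[OF C lam(2) lam_sq eventually_mono[OF gap conjunct1]]
  have "eventually (\<lambda>\<epsilon>. R \<epsilon> < min 1 (((exp (2 * C0))\<^sup>2 - 1) / exp (2 * C0) ^ 4)) (at_right 0)"
    unfolding R_def by (rule order_tendstoD(2))
  with lam_sq gap show ?thesis
  proof eventually_elim
    case (elim \<epsilon>)
    thus ?case using mult_pos_pos[OF C(1), of "lam \<epsilon>"] by auto
  qed
qed

theorem lemma7:
  fixes a b \<kappa> :: "'s \<Rightarrow> real"
    and \<alpha> \<beta> \<gamma> \<delta> :: "real \<Rightarrow> 's \<Rightarrow> real"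
    and C0 C1 C2 C3 :: real
    and lam :: "real \<Rightarrow> real"
  assumes C_pos: "C0 > 0" "C1 > 0" "C2 > 0" "C3 > 0"
    and kappa_pos: "\<And>\<sigma>. \<kappa> \<sigma> > 0"
    and kappa_bd: "\<And>\<sigma>. \<bar>ln (\<kappa> \<sigma>)\<bar> \<le> C0"
    and ab_lower: "\<And>\<sigma>. a \<sigma> - \<bar>b \<sigma>\<bar> \<ge> C1"
    and ab_upper: "\<And>\<sigma>. a \<sigma> + \<bar>b \<sigma>\<bar> \<le> C2"
    and A_bd: "\<And>\<sigma> \<epsilon>. \<bar>\<epsilon>\<bar> \<le> 1 \<Longrightarrow>
                 mat2_norm (\<alpha> \<epsilon> \<sigma>) (\<beta> \<epsilon> \<sigma>) (\<gamma> \<epsilon> \<sigma>) (\<delta> \<epsilon> \<sigma>) \<le> C3"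
    and lam_pos: "\<And>\<epsilon>. \<epsilon> > 0 \<Longrightarrow> lam \<epsilon> > 0"
    and lam_lim: "(lam \<longlongrightarrow> 0) (at_right 0)"
    and lam_log: "((\<lambda>\<epsilon>. ln (lam \<epsilon>) / ln \<epsilon>) \<longlongrightarrow> 0) (at_right 0)"
  shows "\<exists>\<epsilon>0>0. \<forall>\<epsilon>. 0 < \<epsilon> \<and> \<epsilon> < \<epsilon>0 \<longrightarrow>
    (let \<Lambda> = exp (2 * C0 * lam \<epsilon>);
         A = \<Lambda> * (C2 + C3 * \<epsilon>) * \<epsilon>;
         B = \<Lambda> - 1 - C3 * \<epsilon>\<^sup>2 * (\<Lambda> + 1);
         C = (C2 + C3 * \<epsilon>) * \<epsilon>;
         xm = exp (2 * C0) * ((B\<^sup>2 + 4 * A * C) * C) / B ^ 3;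
         xp = exp (- 2 * C0) * (B\<^sup>2 - 2 * A * C) / (A * B);
         xc = exp (2 * C0) * \<Lambda> * xm
     in \<forall>\<sigma> x.
          (let y = Qact \<epsilon> (a \<sigma>) (b \<sigma>) (\<alpha> \<epsilon> \<sigma>) (\<beta> \<epsilon> \<sigma>) (\<gamma> \<epsilon> \<sigma>) (\<delta> \<epsilon> \<sigma>)
                        (Dact (\<kappa> \<sigma>) x)
           in (\<not> in_Ici 0 x \<longrightarrow> \<not> in_Ici xm y)
            \<and> (\<not> in_Ici xm x \<longrightarrow> \<not> in_Ici xc y)
            \<and> (\<not> in_Ici 0 y \<longrightarrow> \<not> in_Ico 0 xp x)))"
proof -
  have bound_iff: "(\<exists>\<epsilon>0>0. \<forall>\<epsilon>. 0 < \<epsilon> \<and> \<epsilon> < \<epsilon>0 \<longrightarrow> P \<epsilon>) \<longleftrightarrow> eventually P (at_right (0::real))"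
    for P by (auto simp: eventually_at_right_field)
  have "eventually (\<lambda>\<epsilon>. 0 < lam \<epsilon>) (at_right 0)"
    using eventually_at_right_less by (rule eventually_mono) (rule lam_pos)
  note scale = eventually_scale_conditions[OF C_pos(1) less_imp_le[OF C_pos(3)] less_imp_le[OF C_pos(4)]
      this lam_lim lam_log]
  have lim: "((\<lambda>\<epsilon>. \<epsilon>) \<longlongrightarrow> 0) (at_right (0::real))" "((\<lambda>\<epsilon>. C3 * \<epsilon>) \<longlongrightarrow> 0) (at_right 0)"
    "((\<lambda>\<epsilon>. 2 * C3 * \<epsilon>\<^sup>2) \<longlongrightarrow> 0) (at_right 0)"
    by (auto intro!: tendsto_eq_intros)
  have small: "eventually (\<lambda>\<epsilon>. 0 < \<epsilon> \<and> \<epsilon> < 1 \<and> C3 * \<epsilon> < C1 \<and> 2 * C3 * \<epsilon>\<^sup>2 < 1) (at_right 0)"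
    using eventually_at_right_less[of "0::real"] order_tendstoD(2)[OF lim(1) zero_less_one]
      order_tendstoD(2)[OF lim(2) C_pos(2)] order_tendstoD(2)[OF lim(3) zero_less_one]
    by eventually_elim auto
  show ?thesis
    unfolding bound_iff using scale small
  proof eventually_elim
    case (elim \<epsilon>)
    have "mat2_norm (\<alpha> \<epsilon> \<sigma>) (\<beta> \<epsilon> \<sigma>) (\<gamma> \<epsilon> \<sigma>) (\<delta> \<epsilon> \<sigma>) \<le> C3" for \<sigma>
      using A_bd elim by simp
    hence entries: "\<bar>\<alpha> \<epsilon> \<sigma>\<bar> \<le> C3" "\<bar>\<beta> \<epsilon> \<sigma>\<bar> \<le> C3" "\<bar>\<gamma> \<epsilon> \<sigma>\<bar> \<le> C3" "\<bar>\<delta> \<epsilon> \<sigma>\<bar> \<le> C3"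
      for \<sigma> using abs_entries_le_mat2_norm order_trans by blast+
    have ab_gap: "C3 * \<epsilon> < a \<sigma> - \<bar>b \<sigma>\<bar>" for \<sigma> using ab_lower[of \<sigma>] elim by linarith
    show ?case unfolding Let_def
      by (intro allI conjI impI; rule Qact_Dact_thresholds;
          use ab_gap elim entries C_pos kappa_pos kappa_bd ab_upper in auto)
  qed
qed

end
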